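(* For every $m\ge1$, $\dim\mathcal{H}_{(m)}\ge\frac{(m-1)!}{m}$, and $\dim\mathcal{H}_{(m)}\sim\frac{(m-1)!}{m}$ as $m\to\infty$.
   Context: $\mathcal{H}_{(m)}$ is the quotient of the span in $\mathbb{C}[\mathbb{S}_m]$ of all $m$-cycles by the span of those generalized Vassiliev elements all of whose terms are $m$-cycles, where for $m\ge2$, $\gamma\in\mathbb{S}_{m-1}$, $q\in[m-1]\cup\{*\}$, $t\in\{0,\dots,m-1\}$, $\alpha_t\in\mathbb{S}_m$ is obtained by inserting a new point $x$ into the line $1<\dots<m-1$ in the gap between $t$ and $t+1$, relabeling in order, acting as $\gamma$ on old points except $q\mapsto x\mapsto\gamma(q)$ if $q\ne*$, $x$ fixed if $q=*$, and for a cycle $v$ of $\gamma$, $E(\gamma,q,v)=\sum_{j\in v}(\alpha_{j-1}-\alpha_j)$. *)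

theory Defs
  imports Complex_Main "HOL-Combinatorics.Permutations" "HOL-Library.Landau_Symbols" "HOL-Library.Function_Algebras"
begin

(* Elements of the group algebra C[S_m] are represented as complex-valued functions
   on permutations (maps nat => nat); S_m = permutations of {1..m}. *)
type_synonym galg = "(nat \<Rightarrow> nat) \<Rightarrow> complex"

definition fscale :: "complex \<Rightarrow> galg \<Rightarrow> galg" where
  "fscale c f = (\<lambda>x. c * f x)"

interpretation gvs: vector_space fscale
  by unfold_locales (auto simp: fscale_def algebra_simps)

definition basis_el :: "(nat \<Rightarrow> nat) \<Rightarrow> galg" where
  "basis_el p = (\<lambda>q. if q = p then 1 else 0)"

definition is_mcycle :: "nat \<Rightarrow> (nat \<Rightarrow> nat) \<Rightarrow> bool" where
  "is_mcycle m p \<longleftrightarrow> p permutes {1..m} \<and> (\<forall>i\<in>{1..m}. {(p ^^ k) i | k. True} = {1..m})"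

definition cycles_of :: "nat \<Rightarrow> (nat \<Rightarrow> nat) \<Rightarrow> nat set set" where
  "cycles_of n g = {{(g ^^ k) a | k. True} | a. a \<in> {1..n}}"

(* relabelling when inserting a new point in the gap between t and t+1 *)
definition ins_lbl :: "nat \<Rightarrow> nat \<Rightarrow> nat" where
  "ins_lbl t i = (if i \<le> t then i else i + 1)"

definition del_lbl :: "nat \<Rightarrow> nat \<Rightarrow> nat" where
  "del_lbl t y = (if y \<le> t then y else y - 1)"

(* alpha_t in S_m from gamma in S_{m-1} and q in [m-1] \<union> {*} (None = * ).
   The new point x gets label t+1. *)
definition alpha :: "nat \<Rightarrow> (nat \<Rightarrow> nat) \<Rightarrow> nat option \<Rightarrow> nat \<Rightarrow> nat \<Rightarrow> nat" where
  "alpha m g q t y =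
     (if y = t + 1 then (case q of None \<Rightarrow> t + 1 | Some r \<Rightarrow> ins_lbl t (g r))
      else if y \<in> {1..m} then
        (if q = Some (del_lbl t y) then t + 1 else ins_lbl t (g (del_lbl t y)))
      else y)"

definition vass :: "nat \<Rightarrow> (nat \<Rightarrow> nat) \<Rightarrow> nat option \<Rightarrow> nat set \<Rightarrow> galg" where
  "vass m g q v = (\<lambda>p. \<Sum>j\<in>v. basis_el (alpha m g q (j - 1)) p - basis_el (alpha m g q j) p)"

definition supp :: "galg \<Rightarrow> (nat \<Rightarrow> nat) set" where
  "supp f = {p. f p \<noteq> 0}"

definition mcycles_span :: "nat \<Rightarrow> galg set" where
  "mcycles_span m = gvs.span {basis_el p | p. is_mcycle m p}"

definition vass_span :: "nat \<Rightarrow> galg set" where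
  "vass_span m = gvs.span {vass m g q v | g q v.
      2 \<le> m \<and> g permutes {1..m-1} \<and> (q = None \<or> (\<exists>r\<in>{1..m-1}. q = Some r))
      \<and> v \<in> cycles_of (m-1) g \<and> supp (vass m g q v) \<subseteq> {p. is_mcycle m p}}"

(* dim H_(m): dimension of the quotient  mcycles_span m / vass_span m
   (vass_span m is a subspace of mcycles_span m) *)
definition dimH :: "nat \<Rightarrow> nat" where
  "dimH m = gvs.dim (mcycles_span m) - gvs.dim (vass_span m)"

end

(*
  Let E(gamma, q, v) be a generalized Vassiliev element all of whose terms are m-cycles.  Unless
  it vanishes, some alpha_t is an m-cycle; then gamma is an (m-1)-cycle, v is all of [m-1], and the
  sum telescopes to alpha_0 - alpha_(m-1), where alpha_0 is alpha_(m-1) conjugated by the rotation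
  rho = (1 2 ... m).  Conversely every difference rho s rho^-1 - s of m-cycles arises in this way.
  Hence H_(m) is the space of coinvariants of conjugation by rho on the span of the m-cycles, and
  its dimension is the number of orbits of this action of Z/m on the (m-1)! m-cycles.  Orbits have
  at most m elements, which gives the lower bound.  An orbit with fewer than m elements consists of
  m-cycles commuting with rho^k for some 1 <= k <= m/2; such an m-cycle is determined by its values
  on [k], so there are at most (m/2) m^(m/2) of them, which is o((m-1)!/m).
*)

theory Submission
  imports Defs "HOL-Real_Asymp.Real_Asymp"
begin

section \<open>Orbits of a periodic map\<close>

lemma funpow_apply_add: "(f ^^ a) ((f ^^ b) x) = (f ^^ (a + b)) x"
  by (simp add: funpow_add)

lemma funpow_orbit_self: "a \<in> {(f ^^ k) a | k. True}"
  by (metis (mono_tags) funpow_0 mem_Collect_eq)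

lemma funpow_orbit_step: "x \<in> {(f ^^ k) a | k. True} \<Longrightarrow> f x \<in> {(f ^^ k) a | k. True}"
proof -
  assume "x \<in> {(f ^^ k) a | k. True}"
  then obtain k where "x = (f ^^ k) a" by blast
  hence "f x = (f ^^ Suc k) a" by simp
  thus ?thesis by blast
qed

lemma funpow_orbit_subset:
  assumes closed: "\<And>x. x \<in> S \<Longrightarrow> f x \<in> S" and a: "a \<in> S"
  shows "{(f ^^ k) a | k. True} \<subseteq> S"
proof -
  have "(f ^^ k) a \<in> S" for k by (induction k) (simp_all add: a closed)
  thus ?thesis by blast
qed

definition orbit_rel :: "('a \<Rightarrow> 'a) \<Rightarrow> 'a set \<Rightarrow> ('a \<times> 'a) set" where
  "orbit_rel f X = {(x, (f ^^ k) x) | x k. x \<in> X}"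

locale periodic_map =
  fixes f :: "'a \<Rightarrow> 'a" and X :: "'a set" and m :: nat
  assumes period_pos: "0 < m"
    and maps_to: "\<And>x. x \<in> X \<Longrightarrow> f x \<in> X"
    and periodic: "\<And>x. x \<in> X \<Longrightarrow> (f ^^ m) x = x"
begin

abbreviation R :: "('a \<times> 'a) set" where
  "R \<equiv> orbit_rel f X"

lemma funpow_in: "x \<in> X \<Longrightarrow> (f ^^ k) x \<in> X"
  by (induction k) (auto intro: maps_to)

lemma funpow_mod: "x \<in> X \<Longrightarrow> (f ^^ k) x = (f ^^ (k mod m)) x"
proof -
  assume x: "x \<in> X"
  have "((f ^^ m) ^^ j) x = x" for j
    by (induction j) (simp_all add: periodic[OF x])
  hence "(f ^^ (k mod m)) ((f ^^ (m * (k div m))) x) = (f ^^ (k mod m)) x"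
    by (simp add: funpow_mult)
  thus ?thesis by (simp add: funpow_apply_add)
qed

lemma funpow_period_return: "x \<in> X \<Longrightarrow> d \<le> m \<Longrightarrow> (f ^^ (m - d)) ((f ^^ d) x) = x"
  by (simp add: funpow_apply_add periodic)

lemma equiv_orbit_rel: "equiv X R"
proof (rule equivI)
  show "R \<subseteq> X \<times> X" by (auto simp: orbit_rel_def funpow_in)
  show "refl_on X R" unfolding refl_on_def orbit_rel_def
    by (auto simp: funpow_in intro!: exI[of _ 0])
  show "sym R"
  proof (rule symI)
    fix x y assume "(x, y) \<in> R"
    then obtain k where x: "x \<in> X" and y: "y = (f ^^ k) x" by (auto simp: orbit_rel_def)
    have "(f ^^ (m * k - k)) y = (f ^^ (m * k)) x"
      using period_pos by (simp add: y funpow_apply_add)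
    also have "\<dots> = x" using funpow_mod[OF x, of "m * k"] by simp
    finally have "x = (f ^^ (m * k - k)) y" by simp
    moreover have "y \<in> X" using funpow_in[OF x] y by simp
    ultimately show "(y, x) \<in> R" unfolding orbit_rel_def by blast
  qed
  show "trans R"
    by (rule transI) (auto simp: orbit_rel_def funpow_apply_add)
qed

lemma orbit_class: "x \<in> X \<Longrightarrow> R `` {x} = (\<lambda>k. (f ^^ k) x) ` {..<m}"
proof -
  assume x: "x \<in> X"
  have "(f ^^ k) x \<in> (\<lambda>k. (f ^^ k) x) ` {..<m}" for k
    using funpow_mod[OF x, of k] period_pos by auto
  thus ?thesis using x by (auto simp: orbit_rel_def)
qed

lemma card_orbit_class_le: "x \<in> X \<Longrightarrow> card (R `` {x}) \<le> m"
  using card_image_le[of "{..<m}" "\<lambda>k. (f ^^ k) x"] by (simp add: orbit_class)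

lemma small_orbit_fixed:
  assumes x: "x \<in> X" and small: "card (R `` {x}) < m"
  shows "\<exists>k\<in>{1..m div 2}. (f ^^ k) x = x"
proof -
  have "\<not> inj_on (\<lambda>k. (f ^^ k) x) {..<m}"
    using small card_image[of "\<lambda>k. (f ^^ k) x" "{..<m}"] by (auto simp: orbit_class[OF x])
  then obtain i j where ij: "i < j" "j < m" "(f ^^ i) x = (f ^^ j) x"
    unfolding inj_on_def by (metis lessThan_iff nat_neq_iff)
  have shift: "m - i + j = j - i + m" using ij by simp
  have "x = (f ^^ (m - i)) ((f ^^ j) x)" using funpow_period_return[OF x, of i] ij by simp
  also have "\<dots> = (f ^^ (j - i)) ((f ^^ m) x)" by (simp only: funpow_apply_add shift)
  finally have fix_d: "(f ^^ (j - i)) x = x" using periodic[OF x] by simp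
  show ?thesis
  proof (cases "j - i \<le> m div 2")
    case True thus ?thesis using fix_d ij by auto
  next
    case False
    have "(f ^^ (m - (j - i))) x = x" using funpow_period_return[OF x, of "j - i"] fix_d ij by simp
    thus ?thesis using False ij by (intro bexI[of _ "m - (j - i)"]) auto
  qed
qed

lemma card_le_period_times_card_quotient:
  assumes "finite X"
  shows "card X \<le> m * card (X // R)"
proof -
  have "card X = card (\<Union> (X // R))" using Union_quotient[OF equiv_orbit_rel] by simp
  also have "\<dots> \<le> (\<Sum>C\<in>X // R. card C)" by (rule card_Union_le_sum_card)
  also have "\<dots> \<le> (\<Sum>C\<in>X // R. m)"
    by (rule sum_mono) (auto elim!: quotientE simp: card_orbit_class_le)
  finally show ?thesis by (simp add: mult.commute)
qed

lemma period_times_card_full_classes_le: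
  assumes fin: "finite X"
  shows "m * card {C \<in> X // R. card C = m} \<le> card X"
proof -
  let ?Full = "{C \<in> X // R. card C = m}"
  have "m * card ?Full = (\<Sum>C\<in>?Full. card C)" by simp
  also have "\<dots> = card (\<Union> ?Full)"
  proof (rule card_Union_disjoint[symmetric])
    show "pairwise disjnt ?Full"
      unfolding pairwise_def disjnt_def using quotient_disj[OF equiv_orbit_rel] by blast
    show "finite C" if "C \<in> ?Full" for C
      using that finite_equiv_class[OF fin equiv_type[OF equiv_orbit_rel]] by simp
  qed
  also have "\<dots> \<le> card X"
    using fin in_quotient_imp_subset[OF equiv_orbit_rel] by (intro card_mono) auto
  finally show ?thesis .
qed

lemma card_small_classes_le:
  assumes fin: "finite X"
  shows "card {C \<in> X // R. card C \<noteq> m} \<le> card {x \<in> X. \<exists>k\<in>{1..m div 2}. (f ^^ k) x = x}"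
proof (rule card_inj_on_le[where f = "\<lambda>C. SOME x. x \<in> C"])
  have equiv: "equiv X R" by (rule equiv_orbit_rel)
  have some_in: "(SOME x. x \<in> C) \<in> C" if "C \<in> X // R" for C
    using that in_quotient_imp_non_empty[OF equiv] by (metis ex_in_conv someI)
  show "inj_on (\<lambda>C. SOME x. x \<in> C) {C \<in> X // R. card C \<noteq> m}"
    by (rule inj_onI) (metis (no_types, lifting) mem_Collect_eq some_in quotient_disj[OF equiv] disjoint_iff)
  show "(\<lambda>C. SOME x. x \<in> C) ` {C \<in> X // R. card C \<noteq> m}
      \<subseteq> {x \<in> X. \<exists>k\<in>{1..m div 2}. (f ^^ k) x = x}"
  proof (rule image_subsetI)
    fix C assume "C \<in> {C \<in> X // R. card C \<noteq> m}"
    hence C: "C \<in> X // R" "card C \<noteq> m" by simp_all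
    define x where "x = (SOME x. x \<in> C)"
    have xC: "x \<in> C" using some_in[OF C(1)] by (simp add: x_def)
    have x: "x \<in> X" using xC in_quotient_imp_subset[OF equiv C(1)] by blast
    obtain y where "C = R `` {y}" using C(1) by (rule quotientE)
    hence "R `` {x} = C" using xC equiv_class_eq[OF equiv] by auto
    hence "card (R `` {x}) < m" using C(2) card_orbit_class_le[OF x] by simp
    thus "(SOME x. x \<in> C) \<in> {x \<in> X. \<exists>k\<in>{1..m div 2}. (f ^^ k) x = x}"
      using small_orbit_fixed[OF x] x by (simp add: x_def)
  qed
qed (use fin in simp)

lemma period_times_card_quotient_le:
  assumes fin: "finite X"
  shows "m * card (X // R) \<le> card X + m * card {x \<in> X. \<exists>k\<in>{1..m div 2}. (f ^^ k) x = x}"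
proof -
  have "finite (X // R)" using finite_quotient[OF fin] equiv_type[OF equiv_orbit_rel] by blast
  hence "card (X // R) = card {C \<in> X // R. card C = m} + card {C \<in> X // R. card C \<noteq> m}"
    by (subst card_Un_disjoint[symmetric]) (auto intro: arg_cong[where f = card])
  thus ?thesis
    using add_mono[OF period_times_card_full_classes_le[OF fin]
        mult_le_mono2[OF card_small_classes_le[OF fin], of m]]
    by (simp add: algebra_simps)
qed

end

section \<open>Spans of differences of basis vectors\<close>

lemma sum_fun_apply: "(\<Sum>x\<in>A. F x) p = (\<Sum>x\<in>A. F x p)"
  by (induction A rule: infinite_finite_induct) auto

lemma independent_basis_el: "finite A \<Longrightarrow> gvs.independent (basis_el ` A)"
proof (rule gvs.independent_if_scalars_zero)
  assume A: "finite A"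
  show "finite (basis_el ` A)" using A by simp
  fix c x assume sum0: "(\<Sum>y\<in>basis_el ` A. fscale (c y) y) = 0" and x: "x \<in> basis_el ` A"
  then obtain p where p: "p \<in> A" "x = basis_el p" by auto
  have "0 = (\<Sum>y\<in>basis_el ` A. c y * y p)"
    using fun_cong[OF sum0, of p] by (simp add: sum_fun_apply fscale_def)
  also have "\<dots> = (\<Sum>y\<in>{x}. c y * y p)"
    by (rule sum.mono_neutral_right) (use A x p in \<open>auto simp: basis_el_def split: if_splits\<close>)
  also have "\<dots> = c x" using p by (simp add: basis_el_def)
  finally show "c x = 0" by simp
qed

lemma inj_basis_el: "inj basis_el"
  by (rule injI) (metis basis_el_def one_neq_zero)

lemma dim_basis_el: "finite A \<Longrightarrow> gvs.dim (basis_el ` A) = card A"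
  using gvs.dim_eq_card_independent[OF independent_basis_el] card_image[OF inj_on_subset[OF inj_basis_el]]
  by simp

definition class_rep :: "('a \<times> 'a) set \<Rightarrow> 'a \<Rightarrow> 'a" where
  "class_rep R x = (SOME y. y \<in> R `` {x})"

lemma class_rep_related: "equiv X R \<Longrightarrow> x \<in> X \<Longrightarrow> (x, class_rep R x) \<in> R"
  unfolding class_rep_def by (metis Image_singleton_iff equiv_class_self someI)

lemma class_rep_eq: "equiv X R \<Longrightarrow> (x, y) \<in> R \<Longrightarrow> class_rep R x = class_rep R y"
  unfolding class_rep_def by (simp add: equiv_class_eq)

lemma card_class_reps:
  assumes equiv: "equiv X R"
  shows "card (class_rep R ` X) = card (X // R)"
proof -
  have class_eq: "R `` {class_rep R x} = R `` {x}" if "x \<in> X" for x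
    using equiv_class_eq[OF equiv class_rep_related[OF equiv that]] by simp
  have "inj_on (\<lambda>r. R `` {r}) (class_rep R ` X)"
  proof (rule inj_onI, clarify)
    fix x x' assume "x \<in> X" "x' \<in> X" "R `` {class_rep R x} = R `` {class_rep R x'}"
    hence "R `` {x} = R `` {x'}" using class_eq by simp
    thus "class_rep R x = class_rep R x'" by (simp add: class_rep_def)
  qed
  moreover have "(\<lambda>r. R `` {r}) ` class_rep R ` X = X // R"
    using class_eq by (auto simp: quotient_def image_image)
  ultimately show ?thesis using card_image by fastforce
qed

lemma dim_class_differences_le:
  assumes fin: "finite X" and equiv: "equiv X R"
  shows "gvs.dim {basis_el y - basis_el x | x y. (x, y) \<in> R} \<le> card X - card (X // R)"
proof -
  let ?rep = "class_rep R"
  define E where "E = (\<lambda>x. basis_el x - basis_el (?rep x)) ` (X - ?rep ` X)"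
  have E_spans: "basis_el x - basis_el (?rep x) \<in> gvs.span E" if x: "x \<in> X" for x
  proof (cases "x \<in> ?rep ` X")
    case True
    hence "?rep x = x" using class_rep_eq[OF equiv class_rep_related[OF equiv]] by auto
    thus ?thesis by (simp add: gvs.span_zero)
  next
    case False thus ?thesis using x by (intro gvs.span_base) (auto simp: E_def)
  qed
  have "{basis_el y - basis_el x | x y. (x, y) \<in> R} \<subseteq> gvs.span E"
  proof clarify
    fix x y assume xy: "(x, y) \<in> R"
    have x: "x \<in> X" and y: "y \<in> X" using xy equiv_type[OF equiv] by auto
    have "basis_el y - basis_el x = (basis_el y - basis_el (?rep y)) - (basis_el x - basis_el (?rep x))"
      using class_rep_eq[OF equiv xy] by simp
    moreover have "(basis_el y - basis_el (?rep y)) - (basis_el x - basis_el (?rep x)) \<in> gvs.span E"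
      by (rule gvs.span_diff[OF E_spans[OF y] E_spans[OF x]])
    ultimately show "basis_el y - basis_el x \<in> gvs.span E" by (simp only:)
  qed
  hence "gvs.dim {basis_el y - basis_el x | x y. (x, y) \<in> R} \<le> card E"
    using fin by (intro gvs.dim_le_card) (auto simp: E_def)
  also have "\<dots> \<le> card (X - ?rep ` X)" unfolding E_def by (rule card_image_le) (use fin in simp)
  also have "\<dots> = card X - card (?rep ` X)"
    using fin class_rep_related[OF equiv] equiv_type[OF equiv] by (intro card_Diff_subset) auto
  finally show ?thesis by (simp add: card_class_reps[OF equiv])
qed

lemma card_le_dim_class_differences:
  assumes fin: "finite X" and equiv: "equiv X R"
  shows "card X \<le> gvs.dim {basis_el y - basis_el x | x y. (x, y) \<in> R} + card (X // R)"
proof -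
  let ?rep = "class_rep R" and ?D = "{basis_el y - basis_el x | x y. (x, y) \<in> R}"
  have fin_D: "finite ?D"
  proof -
    have "finite R" using fin equiv_type[OF equiv] finite_subset by blast
    moreover have "?D = (\<lambda>(x, y). basis_el y - basis_el x) ` R" by auto
    ultimately show ?thesis by simp
  qed
  obtain B where B: "B \<subseteq> ?D" "gvs.independent B" "?D \<subseteq> gvs.span B" "card B = gvs.dim ?D"
    by (rule gvs.basis_exists)
  let ?W = "B \<union> basis_el ` ?rep ` X"
  have "basis_el ` X \<subseteq> gvs.span ?W"
  proof clarify
    fix x assume x: "x \<in> X"
    have "basis_el (?rep x) - basis_el x \<in> ?D" using class_rep_related[OF equiv x] by blast
    hence "basis_el (?rep x) - basis_el x \<in> gvs.span ?W"
      using B(3) gvs.span_mono[of B ?W] by blast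
    moreover have "basis_el (?rep x) \<in> gvs.span ?W" using x by (intro gvs.span_base) blast
    ultimately have "basis_el (?rep x) - (basis_el (?rep x) - basis_el x) \<in> gvs.span ?W"
      by (rule gvs.span_diff[rotated])
    thus "basis_el x \<in> gvs.span ?W" by (simp only: diff_diff_eq2 add_diff_cancel_left')
  qed
  hence "gvs.dim (basis_el ` X) \<le> card ?W"
    using B(1) fin_D fin by (intro gvs.dim_le_card) (auto intro: finite_subset)
  also have "\<dots> \<le> card B + card (basis_el ` ?rep ` X)" by (rule card_Un_le)
  also have "\<dots> \<le> card B + card (?rep ` X)" using fin by (simp add: card_image_le)
  finally show ?thesis using B(4) dim_basis_el[OF fin] card_class_reps[OF equiv] by simp
qed

lemma dim_class_differences:
  assumes fin: "finite X" and equiv: "equiv X R"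
  shows "gvs.dim {basis_el y - basis_el x | x y. (x, y) \<in> R} + card (X // R) = card X"
  using dim_class_differences_le[OF assms] card_le_dim_class_differences[OF assms]
    card_class_reps[OF equiv] card_image_le[OF fin, of "class_rep R"]
  by linarith

lemma dim_shift_differences:
  fixes f :: "(nat \<Rightarrow> nat) \<Rightarrow> nat \<Rightarrow> nat"
  assumes periodic: "periodic_map f X m" and fin: "finite X"
  shows "gvs.dim {basis_el (f x) - basis_el x | x. x \<in> X} + card (X // orbit_rel f X) = card X"
proof -
  interpret periodic_map f X m by (rule periodic)
  let ?S = "{basis_el (f x) - basis_el x | x. x \<in> X}"
  have "basis_el ((f ^^ k) x) - basis_el x \<in> gvs.span ?S" if x: "x \<in> X" for x k
  proof (induction k)
    case 0 thus ?case using gvs.span_zero by (simp only: funpow_0 diff_self)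
  next
    case (Suc k)
    have "basis_el (f ((f ^^ k) x)) - basis_el ((f ^^ k) x) \<in> gvs.span ?S"
      using funpow_in[OF x] by (intro gvs.span_base) blast
    from gvs.span_add[OF this Suc] show ?case
      by (simp only: add_diff_eq diff_add_cancel funpow.simps comp_apply)
  qed
  hence "{basis_el y - basis_el x | x y. (x, y) \<in> R} \<subseteq> gvs.span ?S"
    by (auto simp: orbit_rel_def)
  moreover have "?S \<subseteq> {basis_el y - basis_el x | x y. (x, y) \<in> R}"
    unfolding orbit_rel_def by (force intro: exI[of _ 1])
  hence "?S \<subseteq> gvs.span {basis_el y - basis_el x | x y. (x, y) \<in> R}"
    using gvs.span_superset by (rule order_trans)
  ultimately have "gvs.span ?S = gvs.span {basis_el y - basis_el x | x y. (x, y) \<in> R}"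
    by (simp only: gvs.span_eq)
  hence "gvs.dim ?S = gvs.dim {basis_el y - basis_el x | x y. (x, y) \<in> R}"
    by (rule gvs.span_eq_dim)
  thus ?thesis using dim_class_differences[OF fin equiv_orbit_rel] by simp
qed

section \<open>Conjugation by the rotation of [m]\<close>

definition cyclic_shift :: "nat \<Rightarrow> nat \<Rightarrow> nat \<Rightarrow> nat" where
  "cyclic_shift m n i = (if 1 \<le> i \<and> i \<le> m then (i - 1 + n) mod m + 1 else i)"

definition rot_conj :: "nat \<Rightarrow> (nat \<Rightarrow> nat) \<Rightarrow> nat \<Rightarrow> nat" where
  "rot_conj m s = cyclic_shift m 1 \<circ> s \<circ> cyclic_shift m (m - 1)"

lemma cyclic_shift_Suc: "j < m \<Longrightarrow> cyclic_shift m n (Suc j) = Suc ((j + n) mod m)"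
  by (simp add: cyclic_shift_def)

lemma cyclic_shift_outside: "i \<notin> {1..m} \<Longrightarrow> cyclic_shift m n i = i"
  by (auto simp: cyclic_shift_def)

lemma cyclic_shift_in: "i \<in> {1..m} \<Longrightarrow> cyclic_shift m n i \<in> {1..m}"
  by (cases i) (auto simp: cyclic_shift_Suc Suc_leI)

lemma cyclic_shift_add: "cyclic_shift m a \<circ> cyclic_shift m b = cyclic_shift m (a + b)"
proof
  fix i
  show "(cyclic_shift m a \<circ> cyclic_shift m b) i = cyclic_shift m (a + b) i"
  proof (cases "i \<in> {1..m}")
    case True
    then obtain j where j: "i = Suc j" "j < m" by (cases i) auto
    have "((j + b) mod m + a) mod m = (j + (a + b)) mod m"
      by (simp add: mod_add_left_eq mod_add_right_eq add_ac)
    thus ?thesis using j by (simp add: cyclic_shift_Suc)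
  qed (simp add: cyclic_shift_outside)
qed

lemma cyclic_shift_mod: "cyclic_shift m n = cyclic_shift m (n mod m)"
proof
  fix i
  show "cyclic_shift m n i = cyclic_shift m (n mod m) i"
  proof (cases "i \<in> {1..m}")
    case True
    then obtain j where "i = Suc j" "j < m" by (cases i) auto
    thus ?thesis by (simp add: cyclic_shift_Suc mod_add_right_eq)
  qed (simp add: cyclic_shift_outside)
qed

lemma cyclic_shift_0: "cyclic_shift m 0 = id"
proof
  fix i show "cyclic_shift m 0 i = id i"
    by (cases "i \<in> {1..m}") (auto simp: cyclic_shift_def)
qed

lemma cyclic_shift_multiple: "cyclic_shift m (m * k) = id"
  using cyclic_shift_mod[of m "m * k"] by (simp add: cyclic_shift_0)

lemma cyclic_shift_self: "cyclic_shift m m = id"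
  using cyclic_shift_multiple[of m 1] by simp

lemma cyclic_shift_inverse: "cyclic_shift m ((m - 1) * k) \<circ> cyclic_shift m k = id"
  "cyclic_shift m k \<circ> cyclic_shift m ((m - 1) * k) = id"
proof -
  have "cyclic_shift m (k + (m - 1) * k) = id"
  proof (cases m)
    case 0 thus ?thesis by (auto simp: cyclic_shift_def)
  next
    case (Suc n)
    hence "k + (m - 1) * k = m * k" by simp
    thus ?thesis by (simp add: cyclic_shift_multiple)
  qed
  thus "cyclic_shift m ((m - 1) * k) \<circ> cyclic_shift m k = id"
    "cyclic_shift m k \<circ> cyclic_shift m ((m - 1) * k) = id"
    by (simp_all add: cyclic_shift_add add.commute)
qed

lemma cyclic_shift_permutes: "cyclic_shift m n permutes {1..m}"
proof (rule bij_imp_permutes)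
  show "bij_betw (cyclic_shift m n) {1..m} {1..m}"
  proof (rule bij_betw_byWitness[where f' = "cyclic_shift m ((m - 1) * n)"])
    show "\<forall>a\<in>{1..m}. cyclic_shift m ((m - 1) * n) (cyclic_shift m n a) = a"
      using fun_cong[OF cyclic_shift_inverse(1)] by simp
    show "\<forall>a\<in>{1..m}. cyclic_shift m n (cyclic_shift m ((m - 1) * n) a) = a"
      using fun_cong[OF cyclic_shift_inverse(2)] by simp
  qed (use cyclic_shift_in in blast)+
qed (simp add: cyclic_shift_outside)

lemma cyclic_shift_1: "i \<in> {1..m} \<Longrightarrow> cyclic_shift m 1 i = (if i = m then 1 else i + 1)"
  by (auto simp: cyclic_shift_def)

lemma cyclic_shift_pred:
  assumes i: "i \<in> {1..m}"
  shows "cyclic_shift m (m - 1) i = (if i = 1 then m else i - 1)"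
proof (cases "i = 1")
  case False
  hence "i - 1 + (m - 1) = (i - 2) + m" using i by auto
  hence "(i - 1 + (m - 1)) mod m = (i - 2 + m) mod m" by (rule arg_cong)
  also have "\<dots> = i - 2" using i by auto
  finally have "(i - 1 + (m - 1)) mod m = i - 2" .
  thus ?thesis using i False by (auto simp: cyclic_shift_def)
qed (use i in \<open>auto simp: cyclic_shift_def\<close>)

lemma funpow_rot_conj:
  "(rot_conj m ^^ k) s = cyclic_shift m k \<circ> s \<circ> cyclic_shift m ((m - 1) * k)"
proof (induction k)
  case 0 thus ?case by (simp add: cyclic_shift_0)
next
  case (Suc k)
  have "(rot_conj m ^^ Suc k) s = rot_conj m ((rot_conj m ^^ k) s)" by simp
  also have "\<dots> = (cyclic_shift m 1 \<circ> cyclic_shift m k) \<circ> s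
      \<circ> (cyclic_shift m ((m - 1) * k) \<circ> cyclic_shift m (m - 1))"
    by (simp only: Suc.IH rot_conj_def comp_assoc)
  also have "\<dots> = cyclic_shift m (Suc k) \<circ> s \<circ> cyclic_shift m ((m - 1) * Suc k)"
    by (simp add: cyclic_shift_add add.commute)
  finally show ?case .
qed

lemma funpow_conj:
  assumes "h' \<circ> h = id" "h \<circ> h' = id"
  shows "(h \<circ> s \<circ> h') ^^ k = h \<circ> s ^^ k \<circ> h'"
proof (induction k)
  case 0 thus ?case using assms(2) by simp
next
  case (Suc k)
  have "(h \<circ> s \<circ> h') ^^ Suc k = (h \<circ> s \<circ> h') \<circ> (h \<circ> s ^^ k \<circ> h')"
    by (simp only: funpow.simps Suc.IH)
  also have "\<dots> = h \<circ> s \<circ> (h' \<circ> h) \<circ> s ^^ k \<circ> h'" by (simp only: comp_assoc)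
  also have "\<dots> = h \<circ> s ^^ Suc k \<circ> h'" by (simp only: assms(1) comp_id funpow.simps comp_assoc)
  finally show ?case .
qed

lemma is_mcycle_rot_conj:
  assumes s: "is_mcycle m s"
  shows "is_mcycle m (rot_conj m s)"
proof -
  let ?h = "cyclic_shift m 1" and ?h' = "cyclic_shift m (m - 1)"
  have inv: "?h' \<circ> ?h = id" "?h \<circ> ?h' = id" using cyclic_shift_inverse[of m 1] by simp_all
  have "rot_conj m s permutes {1..m}"
    using s unfolding rot_conj_def is_mcycle_def by (intro permutes_compose cyclic_shift_permutes) simp
  moreover have "{(rot_conj m s ^^ k) i | k. True} = {1..m}" if i: "i \<in> {1..m}" for i
  proof -
    have "{(rot_conj m s ^^ k) i | k. True} = ?h ` {(s ^^ k) (?h' i) | k. True}"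
      unfolding rot_conj_def funpow_conj[OF inv] by auto
    also have "\<dots> = ?h ` {1..m}" using s cyclic_shift_in[OF i] by (simp add: is_mcycle_def)
    also have "\<dots> = {1..m}" by (rule permutes_image[OF cyclic_shift_permutes])
    finally show ?thesis .
  qed
  ultimately show ?thesis by (simp add: is_mcycle_def)
qed

lemma periodic_map_rot_conj: "0 < m \<Longrightarrow> periodic_map (rot_conj m) {p. is_mcycle m p} m"
  by unfold_locales
    (simp_all add: is_mcycle_rot_conj funpow_rot_conj cyclic_shift_multiple cyclic_shift_self mult.commute)

lemma commuting_with_shift_determined:
  assumes k: "1 \<le> k" and s: "s permutes {1..m}" and s': "s' permutes {1..m}"
    and comm: "s \<circ> cyclic_shift m k = cyclic_shift m k \<circ> s"
    and comm': "s' \<circ> cyclic_shift m k = cyclic_shift m k \<circ> s'"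
    and agree: "\<forall>i\<in>{1..k}. s i = s' i"
  shows "s = s'"
proof
  fix i
  show "s i = s' i"
  proof (induction i rule: less_induct)
    case (less i)
    show ?case
    proof (cases "i \<in> {1..m} \<and> k < i")
      case True
      have "cyclic_shift m k (i - k) = i"
        using True k by (cases "i - k") (auto simp: cyclic_shift_Suc)
      hence "s i = cyclic_shift m k (s (i - k))" "s' i = cyclic_shift m k (s' (i - k))"
        using fun_cong[OF comm, of "i - k"] fun_cong[OF comm', of "i - k"] by auto
      thus ?thesis using less.IH[of "i - k"] True k by simp
    next
      case False
      show ?thesis
      proof (cases "i \<in> {1..m}")
        case True thus ?thesis using False agree by auto
      next
        case False thus ?thesis using permutes_not_in[OF s] permutes_not_in[OF s'] by simp
      qed
    qed
  qed
qed

lemma card_commuting_with_shift: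
  assumes k: "1 \<le> k" "k \<le> m"
  shows "card {s. s permutes {1..m} \<and> s \<circ> cyclic_shift m k = cyclic_shift m k \<circ> s} \<le> m ^ k"
proof -
  let ?S = "{s. s permutes {1..m} \<and> s \<circ> cyclic_shift m k = cyclic_shift m k \<circ> s}"
  let ?P = "PiE {1..k} (\<lambda>_. {1..m})"
  have "card ?S \<le> card ?P"
  proof (rule card_inj_on_le[where f = "\<lambda>s. restrict s {1..k}"])
    show "inj_on (\<lambda>s. restrict s {1..k}) ?S"
    proof (rule inj_onI)
      fix s s' assume s: "s \<in> ?S" and s': "s' \<in> ?S"
        and eq: "restrict s {1..k} = restrict s' {1..k}"
      have "\<forall>i\<in>{1..k}. s i = s' i" using eq by (metis restrict_apply')
      thus "s = s'" using commuting_with_shift_determined[OF k(1)] s s' by blast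
    qed
    show "(\<lambda>s. restrict s {1..k}) ` ?S \<subseteq> ?P"
    proof clarify
      fix s assume "s permutes {1..m}"
      thus "restrict s {1..k} \<in> ?P" using permutes_in_image k(2) by fastforce
    qed
  qed (simp add: finite_PiE)
  thus ?thesis by (simp add: card_PiE)
qed

lemma card_rot_conj_fixed:
  assumes k: "1 \<le> k" "k \<le> m"
  shows "card {s. is_mcycle m s \<and> (rot_conj m ^^ k) s = s} \<le> m ^ k"
proof -
  have "s \<circ> cyclic_shift m k = cyclic_shift m k \<circ> s" if "(rot_conj m ^^ k) s = s" for s
  proof -
    have fixed: "cyclic_shift m k \<circ> s \<circ> cyclic_shift m ((m - 1) * k) = s"
      using that by (simp only: funpow_rot_conj)
    have "s \<circ> cyclic_shift m k
        = (cyclic_shift m k \<circ> s \<circ> cyclic_shift m ((m - 1) * k)) \<circ> cyclic_shift m k"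
      by (simp only: fixed)
    also have "\<dots> = cyclic_shift m k \<circ> s \<circ> (cyclic_shift m ((m - 1) * k) \<circ> cyclic_shift m k)"
      by (simp only: comp_assoc)
    finally show ?thesis by (simp only: cyclic_shift_inverse comp_id)
  qed
  hence "{s. is_mcycle m s \<and> (rot_conj m ^^ k) s = s}
      \<subseteq> {s. s permutes {1..m} \<and> s \<circ> cyclic_shift m k = cyclic_shift m k \<circ> s}"
    by (auto simp: is_mcycle_def)
  moreover have "finite {s. s permutes {1..m} \<and> s \<circ> cyclic_shift m k = cyclic_shift m k \<circ> s}"
    using finite_permutations[of "{1..m}"] by (auto intro: finite_subset)
  ultimately have "card {s. is_mcycle m s \<and> (rot_conj m ^^ k) s = s}
      \<le> card {s. s permutes {1..m} \<and> s \<circ> cyclic_shift m k = cyclic_shift m k \<circ> s}"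
    by (intro card_mono)
  thus ?thesis using card_commuting_with_shift[OF k] by (rule le_trans)
qed

section \<open>Counting m-cycles\<close>

lemma finite_mcycles: "finite {p. is_mcycle m p}"
  by (rule finite_subset[OF _ finite_permutations[of "{1..m}"]]) (auto simp: is_mcycle_def)

lemma mcycles_1: "{p. is_mcycle 1 p} = {id}"
proof -
  have "p = id" if "is_mcycle 1 p" for p
  proof
    fix x
    have p: "p permutes {1}" using that by (simp add: is_mcycle_def)
    show "p x = id x"
      using permutes_in_image[OF p, of x] permutes_not_in[OF p, of x] by (cases "x = 1") auto
  qed
  moreover have "is_mcycle 1 id" by (auto simp: is_mcycle_def permutes_id)
  ultimately show ?thesis by auto
qed

lemma is_mcycle_insert_point:
  assumes g: "is_mcycle n g" and r: "r \<in> {1..n}"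
  shows "is_mcycle (Suc n) (g \<circ> transpose r (Suc n))"
proof -
  let ?s = "g \<circ> transpose r (Suc n)"
  have gp: "g permutes {1..n}" using g by (simp add: is_mcycle_def)
  have sp: "?s permutes {1..Suc n}"
    using r permutes_subset[OF gp] by (intro permutes_compose permutes_swap_id) auto
  have g_in: "g x \<in> {1..n}" if "x \<in> {1..n}" for x using permutes_in_image[OF gp] that by simp
  have g_new: "g (Suc n) = Suc n" using permutes_not_in[OF gp] by simp
  have "{(?s ^^ k) y | k. True} = {1..Suc n}" if y: "y \<in> {1..Suc n}" for y
  proof
    show "{(?s ^^ k) y | k. True} \<subseteq> {1..Suc n}"
      using y permutes_in_image[OF sp] by (intro funpow_orbit_subset) auto
    let ?O = "{(?s ^^ k) y | k. True}"
    define a where "a = (if y \<le> n then y else g r)"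
    have a: "a \<in> ?O \<inter> {1..n}"
    proof (cases "y \<le> n")
      case True thus ?thesis using y funpow_orbit_self[of y ?s] by (simp add: a_def)
    next
      case False
      hence "y = Suc n" using y by simp
      hence "?s y = g r" by simp
      thus ?thesis using funpow_orbit_step[OF funpow_orbit_self, of ?s y] False g_in[OF r]
        by (simp add: a_def)
    qed
    have "g z \<in> ?O \<inter> {1..n}" if z: "z \<in> ?O \<inter> {1..n}" for z
    proof (cases "z = r")
      case True
      have "Suc n \<in> ?O" using funpow_orbit_step[of z ?s y] z True g_new by auto
      thus ?thesis using funpow_orbit_step[of "Suc n" ?s y] True g_in[OF r] by auto
    next
      case False
      hence "?s z = g z" using z by (auto simp: transpose_def)
      thus ?thesis using funpow_orbit_step[of z ?s y] z g_in by auto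
    qed
    hence "{(g ^^ k) a | k. True} \<subseteq> ?O \<inter> {1..n}" using a by (intro funpow_orbit_subset)
    hence old: "{1..n} \<subseteq> ?O" using g a by (auto simp: is_mcycle_def)
    hence "r \<in> ?O" using r by blast
    from funpow_orbit_step[OF this] have "Suc n \<in> ?O" using g_new by simp
    moreover have "{1..Suc n} = insert (Suc n) {1..n}" by auto
    ultimately show "{1..Suc n} \<subseteq> ?O" using old by (simp only: insert_subset)
  qed
  thus ?thesis using sp by (simp add: is_mcycle_def)
qed

lemma is_mcycle_drop_point:
  assumes s: "is_mcycle (Suc n) s" and r: "r \<in> {1..n}" and sr: "s r = Suc n"
  shows "is_mcycle n (s \<circ> transpose r (Suc n))"
proof -
  define g where "g = s \<circ> transpose r (Suc n)"
  have sp: "s permutes {1..Suc n}" using s by (simp add: is_mcycle_def)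
  have gp: "g permutes {1..n}"
  proof (rule permutes_superset)
    show "g permutes {1..Suc n}"
      unfolding g_def using r by (intro permutes_compose[OF permutes_swap_id sp]) auto
  qed (use sr in \<open>auto simp: g_def le_Suc_eq\<close>)
  have sg: "s = g \<circ> transpose r (Suc n)" unfolding g_def by (simp add: comp_assoc)
  have g_in: "g x \<in> {1..n}" if "x \<in> {1..n}" for x using permutes_in_image[OF gp] that by simp
  have "{(g ^^ k) a | k. True} = {1..n}" if a: "a \<in> {1..n}" for a
  proof
    let ?O = "{(g ^^ k) a | k. True}"
    show O_sub: "?O \<subseteq> {1..n}" using g_in a by (intro funpow_orbit_subset)
    define S where "S = ?O \<union> (if r \<in> ?O then {Suc n} else {})"
    have "s x \<in> S" if x: "x \<in> S" for x
    proof (cases "x \<in> ?O")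
      case True
      show ?thesis
      proof (cases "x = r")
        case True thus ?thesis using sr \<open>x \<in> ?O\<close> by (simp add: S_def)
      next
        case False
        have "x \<noteq> Suc n" using O_sub True by auto
        hence "s x = g x" using sg False by (simp add: transpose_def)
        thus ?thesis using funpow_orbit_step[OF True] by (simp add: S_def)
      qed
    next
      case False
      hence "x = Suc n" "r \<in> ?O" using x by (auto simp: S_def split: if_splits)
      hence "s x = g r" using sg by simp
      thus ?thesis using funpow_orbit_step[OF \<open>r \<in> ?O\<close>] by (simp add: S_def)
    qed
    moreover have "a \<in> S" using funpow_orbit_self[of a g] unfolding S_def by blast
    ultimately have "{(s ^^ k) a | k. True} \<subseteq> S" by (rule funpow_orbit_subset)
    moreover have "{(s ^^ k) a | k. True} = {1..Suc n}" using s a by (simp add: is_mcycle_def)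
    ultimately have S: "{1..Suc n} \<subseteq> S" by simp
    show "{1..n} \<subseteq> ?O"
    proof
      fix x assume x: "x \<in> {1..n}"
      hence "x \<in> S" "x \<noteq> Suc n" using S by auto
      thus "x \<in> ?O" by (auto simp: S_def split: if_splits)
    qed
  qed
  thus ?thesis using gp by (simp add: is_mcycle_def g_def)
qed

lemma is_mcycle_remove_point:
  assumes n: "1 \<le> n" and s: "is_mcycle (Suc n) s"
  obtains g r where "is_mcycle n g" "r \<in> {1..n}" "s = g \<circ> transpose r (Suc n)"
proof -
  have sp: "s permutes {1..Suc n}" using s by (simp add: is_mcycle_def)
  define r where "r = inv s (Suc n)"
  have sr: "s r = Suc n" unfolding r_def using permutes_inverses(1)[OF sp] by simp
  have "r \<in> {1..Suc n}" unfolding r_def using permutes_in_image[OF permutes_inv[OF sp]] by simp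
  moreover have "r \<noteq> Suc n"
  proof
    assume "r = Suc n"
    hence "s (Suc n) = Suc n" using sr by simp
    hence "{(s ^^ k) (Suc n) | k. True} \<subseteq> {Suc n}" by (intro funpow_orbit_subset) auto
    moreover have "{(s ^^ k) (Suc n) | k. True} = {1..Suc n}" using s by (simp add: is_mcycle_def)
    ultimately have "{1..Suc n} \<subseteq> {Suc n}" by simp
    thus False using n by auto
  qed
  ultimately have r: "r \<in> {1..n}" by auto
  have "s = (s \<circ> transpose r (Suc n)) \<circ> transpose r (Suc n)" by (simp add: comp_assoc)
  thus thesis using that is_mcycle_drop_point[OF s r sr] r by blast
qed

lemma inj_on_insert_point:
  "inj_on (\<lambda>(g, r). g \<circ> transpose r (Suc n)) ({g. g permutes {1..n}} \<times> {1..n})"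
proof (rule inj_onI, clarify)
  fix g r g' r'
  assume g: "g permutes {1..n}" and g': "g' permutes {1..n}" and r: "r \<in> {1..n}"
    and eq: "g \<circ> transpose r (Suc n) = g' \<circ> transpose r' (Suc n)"
  have "r = r'"
  proof (rule ccontr)
    assume ne: "r \<noteq> r'"
    have "(g \<circ> transpose r (Suc n)) r = Suc n" using permutes_not_in[OF g] by simp
    moreover have "(g' \<circ> transpose r' (Suc n)) r = g' r" using ne r by (simp add: transpose_def)
    moreover have "g' r \<in> {1..n}" using permutes_in_image[OF g'] r by simp
    ultimately show False using eq by auto
  qed
  moreover have "g = g'"
  proof -
    have "g = g \<circ> transpose r (Suc n) \<circ> transpose r (Suc n)" by (simp add: comp_assoc)
    also have "\<dots> = g'" using eq \<open>r = r'\<close> by (simp add: comp_assoc)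
    finally show ?thesis .
  qed
  ultimately show "g = g' \<and> r = r'" by simp
qed

lemma card_mcycles: "1 \<le> m \<Longrightarrow> card {p. is_mcycle m p} = fact (m - 1)"
proof (induction m rule: nat_induct_at_least)
  case base thus ?case by (subst mcycles_1) simp
next
  case (Suc n)
  let ?ins = "\<lambda>(g, r). g \<circ> transpose r (Suc n)"
  have "{p. is_mcycle (Suc n) p} = ?ins ` ({p. is_mcycle n p} \<times> {1..n})"
  proof
    show "{p. is_mcycle (Suc n) p} \<subseteq> ?ins ` ({p. is_mcycle n p} \<times> {1..n})"
    proof
      fix s assume "s \<in> {p. is_mcycle (Suc n) p}"
      then obtain g r where "is_mcycle n g" "r \<in> {1..n}" "s = g \<circ> transpose r (Suc n)"
        using is_mcycle_remove_point[OF Suc.hyps] by blast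
      thus "s \<in> ?ins ` ({p. is_mcycle n p} \<times> {1..n})" by (intro image_eqI[of _ _ "(g, r)"]) auto
    qed
    show "?ins ` ({p. is_mcycle n p} \<times> {1..n}) \<subseteq> {p. is_mcycle (Suc n) p}"
      using is_mcycle_insert_point by auto
  qed
  moreover have "inj_on ?ins ({p. is_mcycle n p} \<times> {1..n})"
    by (rule inj_on_subset[OF inj_on_insert_point]) (auto simp: is_mcycle_def)
  ultimately have "card {p. is_mcycle (Suc n) p} = card {p. is_mcycle n p} * n"
    by (simp add: card_image card_cartesian_product)
  thus ?case using Suc.IH Suc.hyps by (cases n) (auto simp: algebra_simps)
qed

section \<open>Vassiliev elements supported on m-cycles\<close>

lemma vass_whole_cycle:
  "vass m g q {1..m - 1} = basis_el (alpha m g q 0) - basis_el (alpha m g q (m - 1))"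
proof
  fix p
  let ?h = "\<lambda>j. basis_el (alpha m g q j) p"
  have "vass m g q {1..m - 1} p = - (\<Sum>j\<in>{Suc 0..m - 1}. ?h j - ?h (j - 1))"
    by (simp add: vass_def sum_negf[symmetric])
  also have "\<dots> = ?h 0 - ?h (m - 1)" using sum_telescope''[of 0 "m - 1" ?h] by simp
  finally show "vass m g q {1..m - 1} p = (basis_el (alpha m g q 0) - basis_el (alpha m g q (m - 1))) p"
    by simp
qed

lemma alpha_last_Some:
  assumes m: "2 \<le> m" and g: "g permutes {1..m - 1}" and r: "r \<in> {1..m - 1}"
  shows "alpha m g (Some r) (m - 1) = g \<circ> transpose r m"
proof
  fix y
  have g_in: "g x \<in> {1..m - 1}" if "x \<in> {1..m - 1}" for x using permutes_in_image[OF g] that by simp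
  have g_out: "g x = x" if "x \<notin> {1..m - 1}" for x using permutes_not_in[OF g] that by simp
  consider "y = m" | "y \<in> {1..m - 1}" | "y \<notin> {1..m}" by fastforce
  thus "alpha m g (Some r) (m - 1) y = (g \<circ> transpose r m) y"
  proof cases
    case 1 thus ?thesis using m g_in[OF r] by (auto simp: alpha_def ins_lbl_def)
  next
    case 2 thus ?thesis using m g_in[OF 2] g_out[of m]
      by (auto simp: alpha_def ins_lbl_def del_lbl_def transpose_def)
  next
    case 3 thus ?thesis using m g_out[of y] r by (auto simp: alpha_def transpose_def)
  qed
qed

text \<open>Inserting the new point into the first gap instead of the last one rotates all labels by one.\<close>

lemma alpha_first:
  assumes m: "2 \<le> m" and g: "g permutes {1..m - 1}"
    and q: "q = None \<or> (\<exists>r\<in>{1..m - 1}. q = Some r)"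
  shows "alpha m g q 0 = rot_conj m (alpha m g q (m - 1))"
proof
  fix y
  have g_in: "g x \<in> {1..m - 1}" if "x \<in> {1..m - 1}" for x using permutes_in_image[OF g] that by simp
  have shift_m: "cyclic_shift m 1 m = 1" using cyclic_shift_1[of m m] m by simp
  consider "y \<notin> {1..m}" | "y = 1" | "y \<in> {2..m}" by fastforce
  thus "alpha m g q 0 y = rot_conj m (alpha m g q (m - 1)) y"
  proof cases
    case 1
    have "alpha m g q (m - 1) y = y" "alpha m g q 0 y = y" using 1 m by (auto simp: alpha_def)
    thus ?thesis using cyclic_shift_outside[OF 1] by (simp add: rot_conj_def)
  next
    case 2
    have pred: "cyclic_shift m (m - 1) y = m" using cyclic_shift_pred[of y m] 2 m by simp
    have mm: "m = m - 1 + 1" using m by simp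
    show ?thesis
    proof (cases q)
      case None
      have "alpha m g q (m - 1) m = m" using None mm by (simp add: alpha_def)
      moreover have "alpha m g q 0 y = 1" using None 2 by (simp add: alpha_def)
      ultimately show ?thesis using pred shift_m by (simp add: rot_conj_def)
    next
      case (Some r)
      hence gr: "g r \<in> {1..m - 1}" using q g_in by auto
      have "alpha m g q (m - 1) m = g r" using Some mm gr by (simp add: alpha_def ins_lbl_def)
      moreover have "alpha m g q 0 y = g r + 1" using Some 2 gr by (simp add: alpha_def ins_lbl_def)
      moreover have "cyclic_shift m 1 (g r) = g r + 1" using cyclic_shift_1[of "g r" m] gr by auto
      ultimately show ?thesis using pred by (simp add: rot_conj_def)
    qed
  next
    case 3
    hence pred: "cyclic_shift m (m - 1) y = y - 1" using cyclic_shift_pred[of y m] by simp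
    have y1: "y - 1 \<in> {1..m - 1}" using 3 by auto
    have "alpha m g q (m - 1) (y - 1) = (if q = Some (y - 1) then m else g (y - 1))"
      using y1 m g_in[OF y1] by (auto simp: alpha_def ins_lbl_def del_lbl_def)
    moreover have "alpha m g q 0 y = (if q = Some (y - 1) then 1 else g (y - 1) + 1)"
      using 3 g_in[OF y1] by (auto simp: alpha_def ins_lbl_def del_lbl_def)
    moreover have "cyclic_shift m 1 (g (y - 1)) = g (y - 1) + 1"
      using cyclic_shift_1[of "g (y - 1)" m] g_in[OF y1] by auto
    ultimately show ?thesis using pred shift_m by (auto simp: rot_conj_def)
  qed
qed

lemma alpha_mcycle_imp_orbit_full:
  assumes g: "g permutes {1..m - 1}" and t: "t \<le> m - 1"
    and mc: "is_mcycle m (alpha m g q t)" and a: "a \<in> {1..m - 1}"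
  shows "{(g ^^ k) a | k. True} = {1..m - 1}"
proof
  let ?A = "alpha m g q t"
  let ?O = "{(g ^^ k) a | k. True}"
  have g_in: "g x \<in> {1..m - 1}" if "x \<in> {1..m - 1}" for x using permutes_in_image[OF g] that by simp
  show O_sub: "?O \<subseteq> {1..m - 1}" using g_in a by (intro funpow_orbit_subset)
  define S where "S = ins_lbl t ` ?O \<union> (if \<exists>r\<in>?O. q = Some r then {t + 1} else {})"
  have ins_new: "ins_lbl t y \<noteq> t + 1" for y by (auto simp: ins_lbl_def)
  have del_ins: "del_lbl t (ins_lbl t y) = y" for y by (auto simp: ins_lbl_def del_lbl_def)
  have "?A x \<in> S" if x: "x \<in> S" for x
  proof (cases "x \<in> ins_lbl t ` ?O")
    case True
    then obtain y where y: "y \<in> ?O" "x = ins_lbl t y" by auto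
    have "x \<in> {1..m}" using y O_sub t by (auto simp: ins_lbl_def)
    hence "?A x = (if q = Some y then t + 1 else ins_lbl t (g y))"
      using y ins_new del_ins by (simp add: alpha_def)
    thus ?thesis using funpow_orbit_step[OF y(1)] y(1) by (auto simp: S_def)
  next
    case False
    then obtain r where r: "r \<in> ?O" "q = Some r" "x = t + 1"
      using x by (auto simp: S_def split: if_splits)
    hence "?A x = ins_lbl t (g r)" by (simp add: alpha_def)
    thus ?thesis using funpow_orbit_step[OF r(1)] by (auto simp: S_def)
  qed
  moreover have "ins_lbl t a \<in> S" using funpow_orbit_self[of a g] by (auto simp: S_def)
  ultimately have "{(?A ^^ k) (ins_lbl t a) | k. True} \<subseteq> S" by (rule funpow_orbit_subset)
  moreover have "ins_lbl t a \<in> {1..m}" using a t by (auto simp: ins_lbl_def)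
  ultimately have S: "{1..m} \<subseteq> S" using mc by (simp add: is_mcycle_def)
  show "{1..m - 1} \<subseteq> ?O"
  proof
    fix b assume b: "b \<in> {1..m - 1}"
    hence "ins_lbl t b \<in> S" using S t by (auto simp: ins_lbl_def)
    then obtain y where "y \<in> ?O" "ins_lbl t b = ins_lbl t y"
      using ins_new by (auto simp: S_def split: if_splits)
    thus "b \<in> ?O" using del_ins by metis
  qed
qed

lemma vass_eq_0_if_no_alpha_mcycle:
  assumes v: "v \<subseteq> {1..m - 1}" and no_mcycle: "\<forall>t\<le>m - 1. \<not> is_mcycle m (alpha m g q t)"
    and supp: "supp (vass m g q v) \<subseteq> {p. is_mcycle m p}"
  shows "vass m g q v = 0"
proof
  fix p
  show "vass m g q v p = 0 p"
  proof (cases "is_mcycle m p")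
    case True
    have zero: "basis_el (alpha m g q t) p = 0" if "t \<le> m - 1" for t
      using no_mcycle True that by (auto simp: basis_el_def)
    show ?thesis unfolding vass_def zero_fun_apply
    proof (intro sum.neutral ballI)
      fix j assume "j \<in> v"
      hence "j \<le> m - 1" using v by auto
      thus "basis_el (alpha m g q (j - 1)) p - basis_el (alpha m g q j) p = 0" by (simp add: zero)
    qed
  next
    case False thus ?thesis using supp by (auto simp: supp_def)
  qed
qed

lemma vass_in_span_rot_diffs:
  assumes m: "2 \<le> m" and g: "g permutes {1..m - 1}"
    and q: "q = None \<or> (\<exists>r\<in>{1..m - 1}. q = Some r)" and v: "v \<in> cycles_of (m - 1) g"
    and supp: "supp (vass m g q v) \<subseteq> {p. is_mcycle m p}"
  shows "vass m g q v \<in> gvs.span {basis_el (rot_conj m s) - basis_el s | s. is_mcycle m s}"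
proof -
  let ?D = "{basis_el (rot_conj m s) - basis_el s | s. is_mcycle m s}"
  obtain a where a: "a \<in> {1..m - 1}" "v = {(g ^^ k) a | k. True}"
    using v unfolding cycles_of_def by blast
  have v_sub: "v \<subseteq> {1..m - 1}"
    unfolding a(2) using a(1) permutes_in_image[OF g] by (intro funpow_orbit_subset) auto
  show ?thesis
  proof (cases "\<exists>t\<le>m - 1. is_mcycle m (alpha m g q t)")
    case True
    then obtain t where "t \<le> m - 1" "is_mcycle m (alpha m g q t)" by blast
    hence "v = {1..m - 1}" using alpha_mcycle_imp_orbit_full[OF g _ _ a(1)] a(2) by blast
    moreover define B where "B = alpha m g q (m - 1)"
    ultimately have vass_eq: "vass m g q v = basis_el (rot_conj m B) - basis_el B"
      using vass_whole_cycle alpha_first[OF m g q] by simp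
    show ?thesis
    proof (cases "rot_conj m B = B")
      case True thus ?thesis using vass_eq gvs.span_zero by simp
    next
      case False
      hence "vass m g q v B \<noteq> 0" using vass_eq by (simp add: basis_el_def)
      hence "is_mcycle m B" using supp by (auto simp: supp_def)
      thus ?thesis using vass_eq by (intro gvs.span_base) blast
    qed
  next
    case False
    thus ?thesis using vass_eq_0_if_no_alpha_mcycle[OF v_sub _ supp] gvs.span_zero by simp
  qed
qed

lemma rot_diff_in_vass_span:
  assumes s: "is_mcycle m s"
  shows "basis_el (rot_conj m s) - basis_el s \<in> vass_span m"
proof (cases "2 \<le> m")
  case False
  hence "cyclic_shift m n i = i" for n i by (cases "m = 1") (auto simp: cyclic_shift_def)
  hence "rot_conj m s = s" by (simp add: rot_conj_def fun_eq_iff)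
  thus ?thesis using gvs.span_zero by (simp add: vass_span_def)
next
  case m: True
  have "1 \<le> m - 1" "is_mcycle (Suc (m - 1)) s" using s m by simp_all
  then obtain g r where g: "is_mcycle (m - 1) g" and r: "r \<in> {1..m - 1}"
    and sg: "s = g \<circ> transpose r (Suc (m - 1))"
    by (rule is_mcycle_remove_point)
  have gp: "g permutes {1..m - 1}" using g by (simp add: is_mcycle_def)
  have q: "Some r = None \<or> (\<exists>r'\<in>{1..m - 1}. Some r = Some r')" using r by auto
  have "s = alpha m g (Some r) (m - 1)" using sg alpha_last_Some[OF m gp r] m by simp
  hence vass_eq: "vass m g (Some r) {1..m - 1} = basis_el (rot_conj m s) - basis_el s"
    using vass_whole_cycle alpha_first[OF m gp q] by simp
  have "{(g ^^ k) 1 | k. True} = {1..m - 1}" "1 \<in> {1..m - 1}" using g m by (simp_all add: is_mcycle_def)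
  hence cyc: "{1..m - 1} \<in> cycles_of (m - 1) g" unfolding cycles_of_def by blast
  have supp: "supp (vass m g (Some r) {1..m - 1}) \<subseteq> {p. is_mcycle m p}"
    using vass_eq s is_mcycle_rot_conj[OF s] by (auto simp: supp_def basis_el_def)
  show ?thesis unfolding vass_span_def vass_eq[symmetric]
    by (intro gvs.span_base CollectI exI[of _ g] exI[of _ "Some r"] exI[of _ "{1..m - 1}"]
        conjI refl m gp q cyc supp)
qed

lemma vass_span_eq_span_rot_diffs:
  "vass_span m = gvs.span {basis_el (rot_conj m s) - basis_el s | s. is_mcycle m s}"
  unfolding vass_span_def gvs.span_eq
  using vass_in_span_rot_diffs rot_diff_in_vass_span[unfolded vass_span_def] by auto

section \<open>The dimension of H(m)\<close>

lemma dim_mcycles_span: "gvs.dim (mcycles_span m) = card {p. is_mcycle m p}"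
proof -
  have "{basis_el p | p. is_mcycle m p} = basis_el ` {p. is_mcycle m p}" by auto
  thus ?thesis unfolding mcycles_span_def using dim_basis_el[OF finite_mcycles] by simp
qed

lemma dimH_eq_card_rotation_classes:
  assumes m: "1 \<le> m"
  shows "dimH m = card ({p. is_mcycle m p} // orbit_rel (rot_conj m) {p. is_mcycle m p})"
proof -
  have "periodic_map (rot_conj m) {p. is_mcycle m p} m" using m by (intro periodic_map_rot_conj) simp
  from dim_shift_differences[OF this finite_mcycles]
  have "gvs.dim {basis_el (rot_conj m s) - basis_el s | s. s \<in> {p. is_mcycle m p}}
      + card ({p. is_mcycle m p} // orbit_rel (rot_conj m) {p. is_mcycle m p}) = card {p. is_mcycle m p}" .
  moreover have "gvs.dim (vass_span m)
      = gvs.dim {basis_el (rot_conj m s) - basis_el s | s. s \<in> {p. is_mcycle m p}}"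
    by (simp add: vass_span_eq_span_rot_diffs)
  ultimately show ?thesis unfolding dimH_def dim_mcycles_span by linarith
qed

lemma card_rot_conj_periodic_points:
  "card {s \<in> {p. is_mcycle m p}. \<exists>k\<in>{1..m div 2}. (rot_conj m ^^ k) s = s}
    \<le> m div 2 * m ^ (m div 2)"
proof -
  have "card {s \<in> {p. is_mcycle m p}. \<exists>k\<in>{1..m div 2}. (rot_conj m ^^ k) s = s}
      \<le> card (\<Union>k\<in>{1..m div 2}. {s. is_mcycle m s \<and> (rot_conj m ^^ k) s = s})"
    by (intro card_mono) (auto intro: finite_subset[OF _ finite_mcycles])
  also have "\<dots> \<le> (\<Sum>k\<in>{1..m div 2}. card {s. is_mcycle m s \<and> (rot_conj m ^^ k) s = s})"
    by (rule card_UN_le) simp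
  also have "\<dots> \<le> (\<Sum>k\<in>{1..m div 2}. m ^ (m div 2))"
  proof (rule sum_mono)
    fix k assume k: "k \<in> {1..m div 2}"
    have "card {s. is_mcycle m s \<and> (rot_conj m ^^ k) s = s} \<le> m ^ k"
      using k by (intro card_rot_conj_fixed) auto
    also have "\<dots> \<le> m ^ (m div 2)" using k by (intro power_increasing) auto
    finally show "card {s. is_mcycle m s \<and> (rot_conj m ^^ k) s = s} \<le> m ^ (m div 2)" .
  qed
  finally show ?thesis by simp
qed

lemma dimH_bounds:
  assumes m: "1 \<le> m"
  shows "fact (m - 1) \<le> m * dimH m"
    and "m * dimH m \<le> fact (m - 1) + m * (m div 2 * m ^ (m div 2))"
proof -
  interpret periodic_map "rot_conj m" "{p. is_mcycle m p}" m
    using m by (intro periodic_map_rot_conj) simp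
  show "fact (m - 1) \<le> m * dimH m"
    using card_le_period_times_card_quotient[OF finite_mcycles]
    by (simp add: dimH_eq_card_rotation_classes[OF m] card_mcycles[OF m])
  show "m * dimH m \<le> fact (m - 1) + m * (m div 2 * m ^ (m div 2))"
    using period_times_card_quotient_le[OF finite_mcycles] card_rot_conj_periodic_points[of m]
    by (simp add: dimH_eq_card_rotation_classes[OF m] card_mcycles[OF m])
      (meson add_left_mono mult_le_mono2 order_trans)
qed

lemma dimH_bounds_real:
  assumes m: "1 \<le> m"
  shows "fact (m - 1) / real m \<le> real (dimH m)
    \<and> real (dimH m) \<le> fact (m - 1) / real m + real (m div 2 * m ^ (m div 2))"
proof -
  have "fact (m - 1) \<le> real m * real (dimH m)"
    using dimH_bounds(1)[OF m] by (metis of_nat_fact of_nat_le_iff of_nat_mult)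
  moreover have "real m * real (dimH m) \<le> fact (m - 1) + real m * real (m div 2 * m ^ (m div 2))"
    using dimH_bounds(2)[OF m] by (metis of_nat_add of_nat_fact of_nat_le_iff of_nat_mult)
  ultimately show ?thesis using m by (simp add: field_simps)
qed

section \<open>Asymptotics\<close>

lemma asymp_equiv_of_bounds:
  fixes a b c :: "'a \<Rightarrow> real"
  assumes bounds: "eventually (\<lambda>x. b x \<le> a x \<and> a x \<le> b x + c x) F"
    and pos: "eventually (\<lambda>x. 0 < b x) F"
    and negligible: "((\<lambda>x. c x / b x) \<longlongrightarrow> 0) F"
  shows "a \<sim>[F] b"
proof (rule asymp_equivI')
  show "((\<lambda>x. a x / b x) \<longlongrightarrow> 1) F"
  proof (rule tendsto_sandwich[OF _ _ tendsto_const])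
    show "eventually (\<lambda>x. 1 \<le> a x / b x) F"
      using bounds pos by eventually_elim simp
    show "eventually (\<lambda>x. a x / b x \<le> 1 + c x / b x) F"
      using bounds pos by eventually_elim (simp add: field_simps)
    show "((\<lambda>x. 1 + c x / b x) \<longlongrightarrow> 1) F"
      using tendsto_add[OF tendsto_const negligible, of 1] by simp
  qed
qed

lemma fact_ge_pow_div_exp: "real n ^ n / exp (real n) \<le> fact n"
proof -
  have "(\<Sum>i\<in>{n}. real n ^ i /\<^sub>R fact i) \<le> (\<Sum>i. real n ^ i /\<^sub>R fact i)"
    by (rule sum_le_suminf) (auto intro: summable_exp)
  hence "real n ^ n / fact n \<le> exp (real n)" by (simp add: exp_def divide_inverse mult.commute)
  thus ?thesis by (simp add: field_simps)
qed

lemma small_classes_bound_negligible: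
  "((\<lambda>m. real (m div 2 * m ^ (m div 2)) / (fact (m - 1) / real m)) \<longlongrightarrow> 0) at_top"
proof (rule tendsto_sandwich[OF _ _ tendsto_const])
  let ?g = "\<lambda>x::real. x powr (x / 2 + 3) * exp x / x powr x"
  show "((\<lambda>m. ?g (real m)) \<longlongrightarrow> 0) at_top"
    by (rule filterlim_compose[OF _ filterlim_real_sequentially]) real_asymp
  show "eventually (\<lambda>m. 0 \<le> real (m div 2 * m ^ (m div 2)) / (fact (m - 1) / real m)) at_top"
    by simp
  show "eventually (\<lambda>m. real (m div 2 * m ^ (m div 2)) / (fact (m - 1) / real m) \<le> ?g (real m)) at_top"
    using eventually_ge_at_top[of "1::nat"]
  proof eventually_elim
    case (elim m)
    have m_pos: "0 < real m" using elim by simp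
    have fact_m: "fact m = real m * fact (m - 1)" using elim by (cases m) auto
    have "real (m div 2 * m ^ (m div 2)) / (fact (m - 1) / real m)
        = real m * real m * (real (m div 2) * real m ^ (m div 2)) / fact m"
      using fact_m m_pos by (simp add: field_simps)
    also have "\<dots> \<le> real m * real m * (real m * real m ^ (m div 2)) / fact m"
      by (intro divide_right_mono mult_left_mono mult_right_mono) auto
    also have "\<dots> = real m powr real (m div 2 + 3) / fact m"
    proof -
      have "real m * real m * (real m * real m ^ (m div 2)) = real m ^ (m div 2 + 3)"
        by (simp add: power_add power3_eq_cube)
      thus ?thesis by (simp only: powr_realpow[OF m_pos])
    qed
    also have "\<dots> \<le> real m powr (real m / 2 + 3) / fact m"
    proof (intro divide_right_mono powr_mono)
      show "real (m div 2 + 3) \<le> real m / 2 + 3" by linarith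
    qed (use elim in auto)
    also have "\<dots> \<le> real m powr (real m / 2 + 3) / (real m powr real m / exp (real m))"
      using fact_ge_pow_div_exp[of m] m_pos by (intro divide_left_mono) (auto simp: powr_realpow)
    finally show ?case by (simp add: field_simps)
  qed
qed

theorem theorem17:
  shows "(\<forall>m::nat. 1 \<le> m \<longrightarrow> real (dimH m) \<ge> fact (m - 1) / real m)
         \<and> (\<lambda>m. real (dimH m)) \<sim>[at_top] (\<lambda>m. fact (m - 1) / real m)"
proof
  show "\<forall>m::nat. 1 \<le> m \<longrightarrow> real (dimH m) \<ge> fact (m - 1) / real m"
    using dimH_bounds_real by blast
  show "(\<lambda>m. real (dimH m)) \<sim>[at_top] (\<lambda>m. fact (m - 1) / real m)"
  proof (rule asymp_equiv_of_bounds[OF _ _ small_classes_bound_negligible])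
    show "eventually (\<lambda>m. fact (m - 1) / real m \<le> real (dimH m)
        \<and> real (dimH m) \<le> fact (m - 1) / real m + real (m div 2 * m ^ (m div 2))) at_top"
      using eventually_ge_at_top[of "1::nat"] by eventually_elim (rule dimH_bounds_real)
    show "eventually (\<lambda>m. 0 < fact (m - 1) / real m) at_top"
      using eventually_ge_at_top[of "1::nat"] by eventually_elim simp
  qed
qed

end
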